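(* Under the hypotheses of the previous theorem (model $\mathfrak{M}$, variable $x$, Boolean expression $f$, formulas $\theta,\varphi_1,\dots,\varphi_n$ with each $\varphi_i$ non-dependent of $x$ in $\mathfrak{M}$ provided $\theta$, variables $z_1,\dots,z_m$ distinct from $x$ and not free in $\theta$, quantifiers $Q_1,\dots,Q_m\in\{\forall,\exists\}$), if $\mathfrak{M}\models\exists x\theta$ then $$[\![Q_mz_m\dots Q_1z_1\,f\big(\exists x(\theta\land\varphi_1),\dots,\exists x(\theta\land\varphi_n)\big)]\!]^{\mathfrak{M}}=[\![\exists x\big(\theta\land Q_mz_m\dots Q_1z_1\,f(\varphi_1,\dots,\varphi_n)\big)]\!]^{\mathfrak{M}},$$ and moreover in this equation any of the occurrences of $\exists x(\theta\land\cdot)$ may be replaced by $\forall x(\theta\to\cdot)$ without changing the meanings.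
   Context: Work in first-order logic with equality over a relational signature, with countably many variables $v_1,v_2,\dots$. A model $\mathfrak{M}$ has nonempty universe $M$; assignments are $\bar a\in M^\omega$ ($a_i$ is the value of $v_i$); for $x=v_i$, $b\in M$, $\bar a^x_b$ is $\bar a$ with $i$-th entry replaced by $b$. $[\![\varphi]\!]^{\mathfrak{M}}=\{\bar a\in M^\omega:\mathfrak{M}\models\varphi[\bar a]\}$; $\mathfrak{M}\models\chi$ means every $\bar a$ satisfies $\chi$. A Boolean expression is built from its arguments using $\neg$ and $\land$. Definition: $\varphi$ is non-dependent of $x$ in $\mathfrak{M}$ provided $\theta$ iff for all $\bar a\in M^\omega$, $b\in M$: if $\mathfrak{M}\models\theta[\bar a]$ and $\mathfrak{M}\models\theta[\bar a^x_b]$ then ($\mathfrak{M}\models\varphi[\bar a]\iff\mathfrak{M}\models\varphi[\bar a^x_b]$). *)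

theory Defs
  imports Main
begin

datatype 'r fo =
    Eq nat nat
  | Rel 'r "nat list"
  | Neg "'r fo"
  | Conj "'r fo" "'r fo"
  | Ex nat "'r fo"

definition All :: "nat \<Rightarrow> 'r fo \<Rightarrow> 'r fo" where
  "All x \<phi> = Neg (Ex x (Neg \<phi>))"

definition Imp :: "'r fo \<Rightarrow> 'r fo \<Rightarrow> 'r fo" where
  "Imp \<phi> \<psi> = Neg (Conj \<phi> (Neg \<psi>))"

primrec fv :: "'r fo \<Rightarrow> nat set" where
  "fv (Eq i j) = {i, j}"
| "fv (Rel R is) = set is"
| "fv (Neg \<phi>) = fv \<phi>"
| "fv (Conj \<phi> \<psi>) = fv \<phi> \<union> fv \<psi>"
| "fv (Ex x \<phi>) = fv \<phi> - {x}"

text \<open>A model is given by a universe M and an interpretation I of relation symbols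
  (I R as applied to the list of arguments). Assignments are a :: nat \<Rightarrow> 'a.\<close>

primrec sat :: "'a set \<Rightarrow> ('r \<Rightarrow> 'a list \<Rightarrow> bool) \<Rightarrow> 'r fo \<Rightarrow> (nat \<Rightarrow> 'a) \<Rightarrow> bool" where
  "sat M I (Eq i j) a = (a i = a j)"
| "sat M I (Rel R is) a = I R (map a is)"
| "sat M I (Neg \<phi>) a = (\<not> sat M I \<phi> a)"
| "sat M I (Conj \<phi> \<psi>) a = (sat M I \<phi> a \<and> sat M I \<psi> a)"
| "sat M I (Ex x \<phi>) a = (\<exists>b\<in>M. sat M I \<phi> (a(x := b)))"

definition assignments :: "'a set \<Rightarrow> (nat \<Rightarrow> 'a) set" where
  "assignments M = {a. \<forall>i. a i \<in> M}"

definition meaning :: "'a set \<Rightarrow> ('r \<Rightarrow> 'a list \<Rightarrow> bool) \<Rightarrow> 'r fo \<Rightarrow> (nat \<Rightarrow> 'a) set" where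
  "meaning M I \<phi> = {a \<in> assignments M. sat M I \<phi> a}"

definition models :: "'a set \<Rightarrow> ('r \<Rightarrow> 'a list \<Rightarrow> bool) \<Rightarrow> 'r fo \<Rightarrow> bool" where
  "models M I \<chi> = (\<forall>a\<in>assignments M. sat M I \<chi> a)"

definition non_dependent ::
  "'a set \<Rightarrow> ('r \<Rightarrow> 'a list \<Rightarrow> bool) \<Rightarrow> 'r fo \<Rightarrow> nat \<Rightarrow> 'r fo \<Rightarrow> bool" where
  "non_dependent M I \<phi> x \<theta> =
     (\<forall>a\<in>assignments M. \<forall>b\<in>M.
        sat M I \<theta> a \<longrightarrow> sat M I \<theta> (a(x := b)) \<longrightarrow>
        (sat M I \<phi> a \<longleftrightarrow> sat M I \<phi> (a(x := b))))"

datatype bexp = Arg nat | BNeg bexp | BAnd bexp bexp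

primrec bargs :: "bexp \<Rightarrow> nat set" where
  "bargs (Arg i) = {i}"
| "bargs (BNeg f) = bargs f"
| "bargs (BAnd f g) = bargs f \<union> bargs g"

primrec bapp :: "bexp \<Rightarrow> 'r fo list \<Rightarrow> 'r fo" where
  "bapp (Arg i) ps = ps ! i"
| "bapp (BNeg f) ps = Neg (bapp f ps)"
| "bapp (BAnd f g) ps = Conj (bapp f ps) (bapp g ps)"

text \<open>Quantifier prefix: the list [(Q1,z1),...,(Qm,zm)], True meaning \<exists> and False meaning \<forall>;
  quants qs \<phi> = Qm zm ... Q1 z1 \<phi> (Q1 z1 innermost).\<close>
definition quant :: "bool \<Rightarrow> nat \<Rightarrow> 'r fo \<Rightarrow> 'r fo" where
  "quant q z \<phi> = (if q then Ex z \<phi> else All z \<phi>)"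

primrec quants :: "(bool \<times> nat) list \<Rightarrow> 'r fo \<Rightarrow> 'r fo" where
  "quants [] \<phi> = \<phi>"
| "quants (q # qs) \<phi> = quants qs (quant (fst q) (snd q) \<phi>)"

definition rel :: "bool \<Rightarrow> nat \<Rightarrow> 'r fo \<Rightarrow> 'r fo \<Rightarrow> 'r fo" where
  "rel e x \<theta> \<phi> = (if e then Ex x (Conj \<theta> \<phi>) else All x (Imp \<theta> \<phi>))"

end

theory Submission
  imports Defs
begin

text \<open>For an assignment \<open>a\<close> and any \<open>b\<close> with \<open>\<theta>\<close> true at \<open>a(x:=b)\<close>, non-dependence makes
  \<open>\<phi>\<^sub>i\<close> take the same value at every such \<open>a(x:=b)\<close>; hence both \<open>\<exists>x(\<theta> \<and> \<phi>\<^sub>i)\<close> and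
  \<open>\<forall>x(\<theta> \<longrightarrow> \<phi>\<^sub>i)\<close> evaluate at \<open>a\<close> to \<open>\<phi>\<^sub>i\<close> at \<open>a(x:=b)\<close>, and so does any Boolean combination.
  As the \<open>z\<^sub>j\<close> differ from \<open>x\<close> and are not free in \<open>\<theta>\<close>, updating \<open>z\<^sub>j\<close> preserves both the
  witness property of \<open>b\<close> and the update at \<open>x\<close>, so the identity survives the quantifier prefix.
  The right-hand matrix is therefore constant on the \<open>\<theta>\<close>-witnesses, which exist by
  \<open>\<M> \<Turnstile> \<exists>x \<theta>\<close>, and either relativization of it collapses to the left-hand side.\<close>

lemma sat_cong_fv:
  assumes "\<forall>v\<in>fv \<phi>. a v = a' v"
  shows "sat M I \<phi> a = sat M I \<phi> a'"
  using assms
proof (induction \<phi> arbitrary: a a')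
  case (Rel R vs)
  then show ?case by (simp cong: map_cong)
next
  case (Conj \<phi> \<psi>)
  have "sat M I \<phi> a = sat M I \<phi> a'" by (rule Conj.IH(1)) (use Conj.prems in auto)
  moreover have "sat M I \<psi> a = sat M I \<psi> a'" by (rule Conj.IH(2)) (use Conj.prems in auto)
  ultimately show ?case by simp
next
  case (Ex y \<phi>)
  then have "sat M I \<phi> (a(y := b)) = sat M I \<phi> (a'(y := b))" for b
    by (intro Ex.IH) auto
  then show ?case by simp
qed auto

lemma sat_quant:
  "sat M I (quant q z \<phi>) a =
    (if q then \<exists>b\<in>M. sat M I \<phi> (a(z := b)) else \<forall>b\<in>M. sat M I \<phi> (a(z := b)))"
  by (simp add: quant_def All_def)

lemma sat_rel:
  "sat M I (rel e x \<theta> \<phi>) a =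
    (if e then \<exists>b\<in>M. sat M I \<theta> (a(x := b)) \<and> sat M I \<phi> (a(x := b))
     else \<forall>b\<in>M. sat M I \<theta> (a(x := b)) \<longrightarrow> sat M I \<phi> (a(x := b)))"
  by (simp add: rel_def All_def Imp_def)

lemma quants_snoc: "quants (qs @ [q]) \<psi> = quant (fst q) (snd q) (quants qs \<psi>)"
  by (induction qs arbitrary: \<psi>) auto

lemma fun_upd_in_assignments: "a \<in> assignments M \<Longrightarrow> b \<in> M \<Longrightarrow> a(x := b) \<in> assignments M"
  by (auto simp: assignments_def)

lemma sat_rel_witness:
  assumes "b \<in> M" and "sat M I \<theta> (a(x := b))"
    and "\<And>b'. b' \<in> M \<Longrightarrow> sat M I \<theta> (a(x := b')) \<Longrightarrow>
           sat M I \<phi> (a(x := b')) = sat M I \<phi> (a(x := b))"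
  shows "sat M I (rel e x \<theta> \<phi>) a = sat M I \<phi> (a(x := b))"
proof (cases e)
  case True
  show ?thesis unfolding sat_rel if_P[OF True] using assms by blast
next
  case False
  show ?thesis unfolding sat_rel if_not_P[OF False] using assms by blast
qed

lemma non_dependent_witnesses_agree:
  assumes "non_dependent M I \<phi> x \<theta>" and "a \<in> assignments M"
    and "b \<in> M" "sat M I \<theta> (a(x := b))" and "b' \<in> M" "sat M I \<theta> (a(x := b'))"
  shows "sat M I \<phi> (a(x := b')) = sat M I \<phi> (a(x := b))"
proof -
  have "a(x := b) \<in> assignments M"
    using assms(2,3) by (rule fun_upd_in_assignments)
  with assms show ?thesis
    unfolding non_dependent_def by (metis fun_upd_upd)
qed

lemma sat_bapp_cong:
  assumes "\<And>i. i \<in> bargs f \<Longrightarrow> sat M I (ps ! i) a = sat M I (ps' ! i) a'"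
  shows "sat M I (bapp f ps) a = sat M I (bapp f ps') a'"
  using assms by (induction f) auto

lemma sat_bapp_rel:
  assumes "bargs f \<subseteq> {..<length \<phi>s}"
    and "\<forall>i<length \<phi>s. non_dependent M I (\<phi>s ! i) x \<theta>"
    and "a \<in> assignments M" and "b \<in> M" and "sat M I \<theta> (a(x := b))"
  shows "sat M I (bapp f (map (\<lambda>i. rel (c i) x \<theta> (\<phi>s ! i)) [0..<length \<phi>s])) a
       = sat M I (bapp f \<phi>s) (a(x := b))"
proof (rule sat_bapp_cong)
  fix i assume "i \<in> bargs f"
  with assms(1) have i: "i < length \<phi>s" by auto
  have "sat M I (rel (c i) x \<theta> (\<phi>s ! i)) a = sat M I (\<phi>s ! i) (a(x := b))"
    using assms(4,5) non_dependent_witnesses_agree[OF assms(2)[rule_format, OF i] assms(3-5)]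
    by (rule sat_rel_witness)
  with i show "sat M I (map (\<lambda>i. rel (c i) x \<theta> (\<phi>s ! i)) [0..<length \<phi>s] ! i) a
             = sat M I (\<phi>s ! i) (a(x := b))" by simp
qed

lemma sat_quants_witness_transfer:
  assumes "\<forall>q\<in>set qs. snd q \<noteq> x \<and> snd q \<notin> fv \<theta>"
    and "\<And>a b. a \<in> assignments M \<Longrightarrow> b \<in> M \<Longrightarrow> sat M I \<theta> (a(x := b)) \<Longrightarrow>
           sat M I \<psi> a = sat M I \<chi> (a(x := b))"
    and "a \<in> assignments M" and "b \<in> M" and "sat M I \<theta> (a(x := b))"
  shows "sat M I (quants qs \<psi>) a = sat M I (quants qs \<chi>) (a(x := b))"
  using assms(1,3-5)
proof (induction qs arbitrary: a rule: rev_induct)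
  case Nil
  from assms(2)[OF Nil.prems(2-4)] show ?case unfolding quants.simps .
next
  case (snoc q qs)
  obtain e z where q: "q = (e, z)" by force
  with snoc.prems have "z \<noteq> x" and "z \<notin> fv \<theta>" by auto
  from snoc.prems(1) have prefix: "\<forall>q\<in>set qs. snd q \<noteq> x \<and> snd q \<notin> fv \<theta>" by simp
  have "sat M I (quants qs \<psi>) (a(z := v)) = sat M I (quants qs \<chi>) ((a(x := b))(z := v))"
    if v: "v \<in> M" for v
  proof -
    have "sat M I \<theta> ((a(z := v))(x := b)) = sat M I \<theta> (a(x := b))"
      using \<open>z \<notin> fv \<theta>\<close> by (intro sat_cong_fv) auto
    from this snoc.prems(4) have "sat M I \<theta> ((a(z := v))(x := b))" by (rule iffD2)
    with fun_upd_in_assignments[OF snoc.prems(2) v] snoc.prems(3)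
    have "sat M I (quants qs \<psi>) (a(z := v)) = sat M I (quants qs \<chi>) ((a(z := v))(x := b))"
      by (rule snoc.IH[OF prefix])
    with \<open>z \<noteq> x\<close> show ?thesis by (simp add: fun_upd_twist)
  qed
  then show ?case
    unfolding q quants_snoc fst_conv snd_conv sat_quant by (intro if_cong refl bex_cong ball_cong)
qed

theorem mainTheorem11:
  fixes M :: "'a set" and I :: "'r \<Rightarrow> 'a list \<Rightarrow> bool"
    and x :: nat and f :: bexp and \<theta> :: "'r fo" and \<phi>s :: "'r fo list"
    and qs :: "(bool \<times> nat) list"
    and c :: "nat \<Rightarrow> bool" and d :: bool
  assumes "M \<noteq> {}"
    and "bargs f \<subseteq> {..<length \<phi>s}"
    and "\<forall>i<length \<phi>s. non_dependent M I (\<phi>s ! i) x \<theta>"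
    and "\<forall>q\<in>set qs. snd q \<noteq> x \<and> snd q \<notin> fv \<theta>"
    and "models M I (Ex x \<theta>)"
  shows "meaning M I (quants qs (bapp f (map (\<lambda>i. rel (c i) x \<theta> (\<phi>s ! i)) [0..<length \<phi>s])))
       = meaning M I (rel d x \<theta> (quants qs (bapp f \<phi>s)))"
proof -
  let ?L = "quants qs (bapp f (map (\<lambda>i. rel (c i) x \<theta> (\<phi>s ! i)) [0..<length \<phi>s]))"
  let ?R = "quants qs (bapp f \<phi>s)"
  have transfer: "sat M I ?L a = sat M I ?R (a(x := b))"
    if "a \<in> assignments M" "b \<in> M" "sat M I \<theta> (a(x := b))" for a b
    using assms(4) sat_bapp_rel[OF assms(2,3)] that by (rule sat_quants_witness_transfer)
  have "sat M I ?L a = sat M I (rel d x \<theta> ?R) a" if a: "a \<in> assignments M" for a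
  proof -
    from assms(5) a obtain b where b: "b \<in> M" "sat M I \<theta> (a(x := b))"
      unfolding models_def by auto
    have "sat M I (rel d x \<theta> ?R) a = sat M I ?R (a(x := b))"
      using b
    proof (rule sat_rel_witness)
      fix b' assume "b' \<in> M" "sat M I \<theta> (a(x := b'))"
      from transfer[OF a this] transfer[OF a b]
      show "sat M I ?R (a(x := b')) = sat M I ?R (a(x := b))" by simp
    qed
    with transfer[OF a b] show ?thesis by simp
  qed
  then show ?thesis
    unfolding meaning_def by blast
qed

end
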